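(* Let $\mathfrak g=\mathfrak k\oplus\mathfrak m$ be a Pauli-spanned Cartan decomposition and let $b_1,\dots,b_d\in\tilde{\mathfrak m}$, $d\ge2$, be pairwise commuting Pauli strings (spanning an Abelian subalgebra $\mathfrak b\subseteq\mathfrak m$), all lying in the same connected component of the frustration graph of $\mathfrak g$. Assume the basis has no associative structure, meaning that for no three distinct indices $p,q,s$ is $i\,b_pb_qb_s\in\mathfrak m$. Then for every $1\le r\le d$, $$|\tilde{\mathfrak k}^r_{1\dots r-1}|=|\tilde{\mathfrak k}^1_{2\dots d}|+(d-r)\,|\tilde{\mathfrak k}^{12}_{3\dots d}|.$$
   Context: Pauli strings on $n$ qubits are tensor products of $I,X,Y,Z$, not all identity; two Pauli strings either commute or anticommute. A Pauli-spanned Cartan decomposition is $\mathfrak g=\mathfrak k\oplus\mathfrak m\subseteq\mathfrak{su}(2^n)$ with $\mathfrak k=\mathrm{span}_{i\mathbb R}\tilde{\mathfrak k}$, $\mathfrak m=\mathrm{span}_{i\mathbb R}\tilde{\mathfrak m}$, $\mathfrak g=\mathrm{span}_{i\mathbb R}\tilde{\mathfrak g}$ with $\tilde{\mathfrak g}=\tilde{\mathfrak k}\sqcup\tilde{\mathfrak m}$ the set of all Pauli strings (up to phase) $\sigma$ with $i\sigma\in\mathfrak g$, and $[\mathfrak k,\mathfrak k]\subseteq\mathfrak k$, $[\mathfrak m,\mathfrak m]\subseteq\mathfrak k$, $[\mathfrak k,\mathfrak m]\subseteq\mathfrak m$. The frustration graph of $\mathfrak g$ has vertex set $\tilde{\mathfrak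 g}$, with edges between anticommuting pairs. For disjoint index lists, $\tilde{\mathfrak k}^{i_1i_2\dots}_{j_1j_2\dots}$ is the set of $k\in\tilde{\mathfrak k}$ anticommuting with every $b_{i_p}$ and commuting with every $b_{j_q}$ (no condition on other indices); e.g. $\tilde{\mathfrak k}^1_{2\dots d}$ anticommutes with $b_1$ and commutes with $b_2,\dots,b_d$, and $\tilde{\mathfrak k}^{12}_{3\dots d}$ anticommutes with $b_1,b_2$ and commutes with $b_3,\dots,b_d$. *)

theory Defs
  imports Main
begin

text \<open>Single-qubit Pauli operators, modulo phase.\<close>
datatype pauli1 = PI | PX | PY | PZ

fun mult1 :: "pauli1 \<Rightarrow> pauli1 \<Rightarrow> pauli1" where
  "mult1 PI b = b"
| "mult1 a PI = a"
| "mult1 PX PX = PI" | "mult1 PY PY = PI" | "mult1 PZ PZ = PI"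
| "mult1 PX PY = PZ" | "mult1 PY PX = PZ"
| "mult1 PY PZ = PX" | "mult1 PZ PY = PX"
| "mult1 PZ PX = PY" | "mult1 PX PZ = PY"

definition is_pauli :: "nat \<Rightarrow> pauli1 list \<Rightarrow> bool" where
  "is_pauli n s \<longleftrightarrow> length s = n \<and> (\<exists>a\<in>set s. a \<noteq> PI)"

definition pmult :: "pauli1 list \<Rightarrow> pauli1 list \<Rightarrow> pauli1 list" where
  "pmult s t = map2 mult1 s t"

definition anticomm1 :: "pauli1 \<Rightarrow> pauli1 \<Rightarrow> bool" where
  "anticomm1 a b \<longleftrightarrow> a \<noteq> PI \<and> b \<noteq> PI \<and> a \<noteq> b"

definition anticomm :: "pauli1 list \<Rightarrow> pauli1 list \<Rightarrow> bool" where
  "anticomm s t \<longleftrightarrow> odd (length (filter (\<lambda>(a,b). anticomm1 a b) (zip s t)))"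

text \<open>Pauli-spanned Cartan decomposition g = k + m of a subalgebra of su(2^n), given by the
  Pauli sets K (= k tilde) and M (= m tilde).  Since distinct Pauli strings are linearly
  independent and [i s, i t] is 0 if s,t commute and a nonzero multiple of i (s t) otherwise,
  the span conditions [k,k] \<subseteq> k, [m,m] \<subseteq> k, [k,m] \<subseteq> m are exactly the closure
  conditions below.\<close>
definition pauli_cartan :: "nat \<Rightarrow> pauli1 list set \<Rightarrow> pauli1 list set \<Rightarrow> bool" where
  "pauli_cartan n K M \<longleftrightarrow>
     (\<forall>s\<in>K \<union> M. is_pauli n s) \<and> K \<inter> M = {} \<and>
     (\<forall>a\<in>K. \<forall>c\<in>K. anticomm a c \<longrightarrow> pmult a c \<in> K) \<and>
     (\<forall>a\<in>M. \<forall>c\<in>M. anticomm a c \<longrightarrow> pmult a c \<in> K) \<and>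
     (\<forall>a\<in>K. \<forall>c\<in>M. anticomm a c \<longrightarrow> pmult a c \<in> M)"

definition frust_edge :: "pauli1 list set \<Rightarrow> pauli1 list \<Rightarrow> pauli1 list \<Rightarrow> bool" where
  "frust_edge G s t \<longleftrightarrow> s \<in> G \<and> t \<in> G \<and> anticomm s t"

definition same_component :: "pauli1 list set \<Rightarrow> pauli1 list \<Rightarrow> pauli1 list \<Rightarrow> bool" where
  "same_component G s t \<longleftrightarrow> s \<in> G \<and> t \<in> G \<and> (frust_edge G)\<^sup>*\<^sup>* s t"

text \<open>k-tilde^{A}_{C}: elements of K anticommuting with all b_i (i in A) and commuting with
  all b_j (j in C).\<close>
definition kset :: "pauli1 list set \<Rightarrow> (nat \<Rightarrow> pauli1 list) \<Rightarrow> nat set \<Rightarrow> nat set \<Rightarrow> pauli1 list set" where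
  "kset K b A C = {k \<in> K. (\<forall>i\<in>A. anticomm k (b i)) \<and> (\<forall>j\<in>C. \<not> anticomm k (b j))}"

end

theory Submission
  imports Defs "HOL-Combinatorics.Transposition"
begin

text \<open>Write \<open>A(k)\<close> (\<open>anticomm_indices k\<close>) for the set of indices \<open>i\<close> such that \<open>k\<close>
  anticommutes with \<open>b\<^sub>i\<close>. No \<open>k \<in> K\<close> has three indices, since otherwise the Cartan
  relations would put \<open>b\<^sub>p b\<^sub>q b\<^sub>s\<close> into \<open>m\<close>. Hence the set counted on the left is the disjoint union of the
  \<open>k\<close> with \<open>A(k) = {r}\<close> and those with \<open>A(k) = {r, q}\<close>, \<open>q > r\<close>, and it suffices that the
  number of \<open>k\<close> with \<open>A(k) = X\<close> depends only on \<open>|X|\<close>.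

  If some \<open>k\<^sub>0\<close> has \<open>A(k\<^sub>0) = {p, q}\<close>, a product of two Clifford rotations about
  elements of \<open>K\<close> permutes \<open>K\<close> and exchanges \<open>b\<^sub>p\<close> with \<open>b\<^sub>q\<close>, so these counts are
  invariant under the transposition \<open>(p q)\<close>. Such pairs generate an equivalence relation
  on the indices. If it had a class \<open>P\<close> other than all indices, every element of
  \<open>K \<union> M\<close> would anticommute only with \<open>b\<close>'s indexed inside \<open>P\<close> or only with \<open>b\<close>'s
  indexed outside, and this splitting propagates along the edges of the frustration
  graph, so no path could join \<open>b\<^sub>p\<close>, \<open>p \<in> P\<close>, to \<open>b\<^sub>q\<close>, \<open>q \<notin> P\<close>. So all transpositions
  are available.\<close>

lemma anticomm_Cons: "anticomm (a # s) (c # t) \<longleftrightarrow> anticomm1 a c \<noteq> anticomm s t"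
  by (auto simp: anticomm_def)

lemma anticomm_Nil [simp]: "\<not> anticomm [] t" "\<not> anticomm s []"
  by (simp_all add: anticomm_def)

lemma pmult_Cons [simp]: "pmult (a # s) (c # t) = mult1 a c # pmult s t"
  by (simp add: pmult_def)

lemma pmult_Nil [simp]: "pmult [] t = []" "pmult s [] = []"
  by (simp_all add: pmult_def)

lemma length_pmult [simp]: "length (pmult s t) = min (length s) (length t)"
  by (simp add: pmult_def)

lemma anticomm1_mult1: "anticomm1 (mult1 a b) c \<longleftrightarrow> anticomm1 a c \<noteq> anticomm1 b c"
  by (cases a; cases b; cases c) (simp_all add: anticomm1_def)

lemma mult1_commute: "mult1 a b = mult1 b a"
  by (cases a; cases b) simp_all

lemma mult1_assoc: "mult1 (mult1 a b) c = mult1 a (mult1 b c)"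
  by (cases a; cases b; cases c) simp_all

lemma mult1_cancel_left: "mult1 a (mult1 a b) = b"
  by (cases a; cases b) simp_all

lemma anticomm_commute: "anticomm s t \<longleftrightarrow> anticomm t s"
proof (induction s arbitrary: t)
  case (Cons a s)
  then show ?case
    by (cases t) (auto simp: anticomm_Cons anticomm1_def)
qed simp

lemma anticomm_self [simp]: "\<not> anticomm s s"
  by (induction s) (auto simp: anticomm_Cons anticomm1_def)

lemma anticomm_pmult:
  assumes "length s = length t" "length t = length u"
  shows "anticomm (pmult s t) u \<longleftrightarrow> anticomm s u \<noteq> anticomm t u"
  using assms
proof (induction s arbitrary: t u)
  case (Cons a s)
  then obtain c t' e u' where "t = c # t'" "u = e # u'"
    by (cases t; cases u) auto
  with Cons show ?case
    by (auto simp: anticomm_Cons anticomm1_mult1)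
qed simp

lemma pmult_commute: "pmult s t = pmult t s"
proof (induction s arbitrary: t)
  case (Cons a s)
  then show ?case
    by (cases t) (auto intro: mult1_commute)
qed simp

lemma pmult_assoc: "pmult (pmult s t) u = pmult s (pmult t u)"
proof (induction s arbitrary: t u)
  case (Cons a s)
  then show ?case
    by (cases t; cases u) (auto simp: mult1_assoc)
qed simp

lemma pmult_cancel_left: "length s = length t \<Longrightarrow> pmult s (pmult s t) = t"
proof (induction s arbitrary: t)
  case (Cons a s)
  then show ?case
    by (cases t) (auto simp: mult1_cancel_left)
qed simp

lemma anticomm_pmult_right:
  assumes "length s = length t" "length t = length u"
  shows "anticomm u (pmult s t) \<longleftrightarrow> anticomm u s \<noteq> anticomm u t"
  using anticomm_pmult[OF assms] by (metis anticomm_commute)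

text \<open>Up to phase, \<open>clifford_rot c\<close> is conjugation by the Clifford rotation
  \<open>exp (i \<pi>/4 c)\<close>: it fixes the strings commuting with \<open>c\<close> and multiplies the
  others by \<open>c\<close>.\<close>
definition clifford_rot :: "pauli1 list \<Rightarrow> pauli1 list \<Rightarrow> pauli1 list" where
  "clifford_rot c x = (if anticomm x c then pmult c x else x)"

lemma length_clifford_rot [simp]: "length c = length x \<Longrightarrow> length (clifford_rot c x) = length x"
  by (simp add: clifford_rot_def)

lemma anticomm_clifford_rot:
  assumes "length c = length x" "length x = length y"
  shows "anticomm (clifford_rot c x) y \<longleftrightarrow> anticomm x y \<noteq> (anticomm x c \<and> anticomm c y)"
  using assms by (auto simp: clifford_rot_def anticomm_pmult)

lemma clifford_rot_involutive:
  assumes "length c = length x"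
  shows "clifford_rot c (clifford_rot c x) = x"
  using assms by (auto simp: clifford_rot_def anticomm_pmult pmult_cancel_left)

lemma anticomm_rotation_pair:
  fixes c u v x w :: "pauli1 list"
  defines "\<sigma> \<equiv> clifford_rot (pmult (pmult c u) v) \<circ> clifford_rot c"
  assumes len: "length c = length x" "length u = length x" "length v = length x"
    and cu: "anticomm c u" and cv: "anticomm c v" and uv: "\<not> anticomm u v"
  shows "anticomm (\<sigma> x) u \<longleftrightarrow> anticomm x v"
    and "anticomm (\<sigma> x) v \<longleftrightarrow> anticomm x u"
    and "length w = length x \<Longrightarrow> \<not> anticomm c w \<Longrightarrow> \<not> anticomm u w \<Longrightarrow> \<not> anticomm v w \<Longrightarrow>
      anticomm (\<sigma> x) w \<longleftrightarrow> anticomm x w"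
proof -
  define c' where "c' = pmult (pmult c u) v"
  have len': "length c' = length x"
    using len by (simp add: c'_def)
  have rot: "anticomm (\<sigma> x) y \<longleftrightarrow>
      anticomm (clifford_rot c x) y \<noteq> (anticomm (clifford_rot c x) c' \<and> anticomm c' y)"
    if "length y = length x" for y
    using that len len' by (simp add: \<sigma>_def c'_def [symmetric] anticomm_clifford_rot)
  have x_c': "anticomm x c' \<longleftrightarrow> (anticomm x c \<noteq> anticomm x u) \<noteq> anticomm x v"
    using len by (simp add: c'_def anticomm_pmult_right)
  have c_c': "\<not> anticomm c c'"
    using len cu cv by (simp add: c'_def anticomm_pmult_right)
  have c'_y: "anticomm c' y \<longleftrightarrow> (anticomm c y \<noteq> anticomm u y) \<noteq> anticomm v y"
    if "length y = length x" for y
    using that len by (simp add: c'_def anticomm_pmult)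
  have formula: "anticomm (\<sigma> x) y \<longleftrightarrow>
      (anticomm x y \<noteq> (anticomm x c \<and> anticomm c y))
        \<noteq> (((anticomm x c \<noteq> anticomm x u) \<noteq> anticomm x v) \<and> ((anticomm c y \<noteq> anticomm u y) \<noteq> anticomm v y))"
    if "length y = length x" for y
    using that len len' c_c' by (simp add: rot anticomm_clifford_rot x_c' c'_y)
  show "anticomm (\<sigma> x) u \<longleftrightarrow> anticomm x v"
    using formula[OF len(2)] cu uv by (auto simp: anticomm_commute[of v u])
  show "anticomm (\<sigma> x) v \<longleftrightarrow> anticomm x u"
    using formula[OF len(3)] cv uv by auto
  show "anticomm (\<sigma> x) w \<longleftrightarrow> anticomm x w"
    if "length w = length x" "\<not> anticomm c w" "\<not> anticomm u w" "\<not> anticomm v w"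
    using formula[OF that(1)] that(2-) by auto
qed

locale commuting_cartan_family =
  fixes n d :: nat and K M :: "pauli1 list set" and b :: "nat \<Rightarrow> pauli1 list"
  assumes cartan: "pauli_cartan n K M"
    and b_in_M: "\<forall>i\<in>{1..d}. b i \<in> M"
    and b_commute: "\<forall>i\<in>{1..d}. \<forall>j\<in>{1..d}. \<not> anticomm (b i) (b j)"
begin

definition anticomm_indices :: "pauli1 list \<Rightarrow> nat set" where
  "anticomm_indices x = {i\<in>{1..d}. anticomm x (b i)}"

definition linked :: "nat \<Rightarrow> nat \<Rightarrow> bool" where
  "linked p q \<longleftrightarrow> p = q \<or> (\<exists>k\<in>K. anticomm_indices k = {p, q})"

definition kcard :: "nat set \<Rightarrow> nat" where
  "kcard X = card {k\<in>K. anticomm_indices k = X}"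

lemma length_mem: "x \<in> K \<union> M \<Longrightarrow> length x = n"
  using cartan by (auto simp: pauli_cartan_def is_pauli_def)

lemma length_b: "i \<in> {1..d} \<Longrightarrow> length (b i) = n"
  using b_in_M length_mem by blast

lemma finite_K: "finite K"
proof -
  have univ: "(UNIV :: pauli1 set) = {PI, PX, PY, PZ}"
    using pauli1.exhaust by auto
  have "finite (UNIV :: pauli1 set)"
    unfolding univ by simp
  then have "finite {s :: pauli1 list. set s \<subseteq> UNIV \<and> length s = n}"
    by (rule finite_lists_length_eq)
  then show ?thesis
    by (rule finite_subset[rotated]) (auto simp: length_mem)
qed

lemma pmult_K_K: "x \<in> K \<Longrightarrow> y \<in> K \<Longrightarrow> anticomm x y \<Longrightarrow> pmult x y \<in> K"
  and pmult_M_M: "x \<in> M \<Longrightarrow> y \<in> M \<Longrightarrow> anticomm x y \<Longrightarrow> pmult x y \<in> K"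
  and pmult_K_M: "x \<in> K \<Longrightarrow> y \<in> M \<Longrightarrow> anticomm x y \<Longrightarrow> pmult x y \<in> M"
  using cartan by (auto simp: pauli_cartan_def)

lemma pmult_mem: "x \<in> K \<union> M \<Longrightarrow> y \<in> K \<union> M \<Longrightarrow> anticomm x y \<Longrightarrow> pmult x y \<in> K \<union> M"
  using pmult_K_K pmult_M_M pmult_K_M[of x y] pmult_K_M[of y x]
  by (auto simp: pmult_commute anticomm_commute)

lemma anticomm_indices_subset: "anticomm_indices x \<subseteq> {1..d}"
  by (auto simp: anticomm_indices_def)

lemma mem_anticomm_indices: "i \<in> {1..d} \<Longrightarrow> i \<in> anticomm_indices x \<longleftrightarrow> anticomm x (b i)"
  by (simp add: anticomm_indices_def)

lemma anticomm_indices_b: "i \<in> {1..d} \<Longrightarrow> anticomm_indices (b i) = {}"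
  using b_commute by (auto simp: anticomm_indices_def)

lemma anticomm_indices_pmult:
  assumes "length x = n" "length y = n"
  shows "anticomm_indices (pmult x y) = sym_diff (anticomm_indices x) (anticomm_indices y)"
  using assms by (auto simp: anticomm_indices_def anticomm_pmult length_b)

lemma anticomm_indices_M_in_K:
  assumes x: "x \<in> M" and nonempty: "anticomm_indices x \<noteq> {}"
  shows "\<exists>k\<in>K. anticomm_indices k = anticomm_indices x"
proof -
  obtain i where i: "i \<in> {1..d}" "anticomm x (b i)"
    using nonempty by (auto simp: anticomm_indices_def)
  have "pmult x (b i) \<in> K"
    using pmult_M_M x b_in_M i by blast
  moreover have "anticomm_indices (pmult x (b i)) = anticomm_indices x"
    using x i by (simp add: anticomm_indices_pmult length_mem length_b anticomm_indices_b)
  ultimately show ?thesis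
    by blast
qed

lemma clifford_rot_mem: "c \<in> K \<Longrightarrow> x \<in> K \<Longrightarrow> clifford_rot c x \<in> K"
  using pmult_K_K by (auto simp: clifford_rot_def anticomm_commute)

lemma bij_betw_clifford_rot: "c \<in> K \<Longrightarrow> bij_betw (clifford_rot c) K K"
  by (rule bij_betw_byWitness[where f' = "clifford_rot c"])
    (auto simp: clifford_rot_involutive length_mem clifford_rot_mem)

lemma anticomm_b_rotation_pair:
  assumes p: "p \<in> {1..d}" and q: "q \<in> {1..d}" and pq: "p \<noteq> q"
    and k0: "k0 \<in> K" and k0_pq: "anticomm_indices k0 = {p, q}"
    and x: "x \<in> K" and i: "i \<in> {1..d}"
  shows "anticomm ((clifford_rot (pmult (pmult k0 (b p)) (b q)) \<circ> clifford_rot k0) x) (b i)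
    \<longleftrightarrow> anticomm x (b (transpose p q i))"
proof -
  have k0_b: "anticomm k0 (b j) \<longleftrightarrow> j = p \<or> j = q" if "j \<in> {1..d}" for j
    using k0_pq that by (auto simp: anticomm_indices_def)
  have len: "length x = n" "length k0 = n" "length (b p) = n" "length (b q) = n" "length (b i) = n"
    using x k0 p q i by (simp_all add: length_mem length_b)
  note rotation = anticomm_rotation_pair[of k0 x "b p" "b q",
      OF _ _ _ _ _ b_commute[rule_format, OF p q]]
  consider "i = p" | "i = q" | "i \<noteq> p" "i \<noteq> q"
    by blast
  then show ?thesis
  proof cases
    case 1
    then show ?thesis
      using rotation(1) len k0_b p q by simp
  next
    case 2
    then show ?thesis
      using rotation(2) len k0_b p q by simp
  next
    case 3
    then show ?thesis
      using rotation(3)[of "b i"] len k0_b p q i b_commute by simp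
  qed
qed

lemma exists_bij_transpose:
  assumes p: "p \<in> {1..d}" and q: "q \<in> {1..d}" and pq: "p \<noteq> q"
    and k0: "k0 \<in> K" and k0_pq: "anticomm_indices k0 = {p, q}"
  shows "\<exists>\<sigma>. bij_betw \<sigma> K K \<and>
    (\<forall>x\<in>K. anticomm_indices (\<sigma> x) = transpose p q ` anticomm_indices x)"
proof -
  define k1 where "k1 = pmult (pmult k0 (b p)) (b q)"
  define \<sigma> where "\<sigma> = clifford_rot k1 \<circ> clifford_rot k0"
  have k0_b: "anticomm k0 (b i)" if "i \<in> {p, q}" for i
    using k0_pq that p q mem_anticomm_indices by blast
  have "pmult k0 (b p) \<in> M"
    using pmult_K_M k0 k0_b b_in_M p by blast
  moreover have "anticomm (pmult k0 (b p)) (b q)"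
    using k0 k0_b p q b_commute by (simp add: anticomm_pmult length_mem length_b)
  ultimately have "k1 \<in> K"
    unfolding k1_def using pmult_M_M b_in_M q by blast
  then have bij: "bij_betw \<sigma> K K"
    unfolding \<sigma>_def using k0 bij_betw_clifford_rot bij_betw_trans by blast
  have range: "transpose p q i \<in> {1..d} \<longleftrightarrow> i \<in> {1..d}" for i
    using p q by (auto simp: transpose_def)
  have image: "i \<in> transpose p q ` A \<longleftrightarrow> transpose p q i \<in> A" for i and A :: "nat set"
    by (metis image_iff transpose_involutory)
  have "anticomm_indices (\<sigma> x) = transpose p q ` anticomm_indices x" if x: "x \<in> K" for x
  proof (rule set_eqI)
    fix i
    show "i \<in> anticomm_indices (\<sigma> x) \<longleftrightarrow> i \<in> transpose p q ` anticomm_indices x"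
      unfolding anticomm_indices_def image mem_Collect_eq
      using range[of i] anticomm_b_rotation_pair[OF p q pq k0 k0_pq x, of i]
      by (auto simp: \<sigma>_def k1_def)
  qed
  with bij show ?thesis
    by blast
qed

lemma kcard_transpose_image:
  assumes p: "p \<in> {1..d}" and q: "q \<in> {1..d}" and pq: "linked p q"
  shows "kcard (transpose p q ` X) = kcard X"
proof (cases "p = q")
  case False
  then obtain k0 where k0: "k0 \<in> K" "anticomm_indices k0 = {p, q}"
    using pq unfolding linked_def by blast
  obtain \<sigma> where bij: "bij_betw \<sigma> K K"
    and \<sigma>: "\<And>x. x \<in> K \<Longrightarrow> anticomm_indices (\<sigma> x) = transpose p q ` anticomm_indices x"
    using exists_bij_transpose[OF p q False k0] by blast
  have "{k\<in>K. anticomm_indices k = transpose p q ` X} = \<sigma> ` {k\<in>K. anticomm_indices k = X}"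
  proof (intro set_eqI iffI)
    fix k
    assume k: "k \<in> {k\<in>K. anticomm_indices k = transpose p q ` X}"
    then have "k \<in> \<sigma> ` K"
      using bij by (simp add: bij_betw_def)
    then obtain k' where "k' \<in> K" "k = \<sigma> k'"
      by blast
    with k show "k \<in> \<sigma> ` {k\<in>K. anticomm_indices k = X}"
      using \<sigma> by (auto simp: inj_image_eq_iff[OF inj_transpose])
  next
    fix k
    assume "k \<in> \<sigma> ` {k\<in>K. anticomm_indices k = X}"
    then show "k \<in> {k\<in>K. anticomm_indices k = transpose p q ` X}"
      using \<sigma> bij by (auto simp: bij_betw_def)
  qed
  moreover have "inj_on \<sigma> {k\<in>K. anticomm_indices k = X}"
    using bij by (auto simp: bij_betw_def intro: inj_on_subset)
  ultimately show ?thesis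
    by (simp add: kcard_def card_image)
qed simp

lemma linked_trans:
  assumes p: "p \<in> {1..d}" and q: "q \<in> {1..d}"
    and pq: "linked p q" and qr: "linked q r"
  shows "linked p r"
proof (cases "p = q \<or> q = r \<or> p = r")
  case False
  then obtain k1 k2 where k1: "k1 \<in> K" "anticomm_indices k1 = {p, q}"
    and k2: "k2 \<in> K" "anticomm_indices k2 = {q, r}"
    using pq qr unfolding linked_def by blast
  obtain \<sigma> where "bij_betw \<sigma> K K"
    and "\<forall>x\<in>K. anticomm_indices (\<sigma> x) = transpose p q ` anticomm_indices x"
    using exists_bij_transpose[OF p q _ k1] False by blast
  then have "\<sigma> k2 \<in> K" "anticomm_indices (\<sigma> k2) = {p, r}"
    using k2 False by (simp_all add: bij_betw_apply)
  then show ?thesis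
    unfolding linked_def by blast
qed (use pq qr in \<open>auto simp: linked_def\<close>)

lemma split_invariant_step:
  assumes split: "\<forall>x\<in>K \<union> M. anticomm_indices x \<subseteq> P \<or> anticomm_indices x \<inter> P = {}"
    and u: "\<forall>x. frust_edge (K \<union> M) u x \<longrightarrow> anticomm_indices x \<subseteq> P"
    and uv: "frust_edge (K \<union> M) u v"
  shows "anticomm_indices v \<subseteq> P"
    and "\<forall>x. frust_edge (K \<union> M) v x \<longrightarrow> anticomm_indices x \<subseteq> P"
proof -
  show v: "anticomm_indices v \<subseteq> P"
    using u uv by blast
  show "\<forall>x. frust_edge (K \<union> M) v x \<longrightarrow> anticomm_indices x \<subseteq> P"
  proof (intro allI impI)
    fix x
    assume vx: "frust_edge (K \<union> M) v x"
    show "anticomm_indices x \<subseteq> P"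
    proof (rule ccontr)
      assume x_out: "\<not> anticomm_indices x \<subseteq> P"
      have mem: "u \<in> K \<union> M" "v \<in> K \<union> M" "x \<in> K \<union> M"
        using uv vx by (auto simp: frust_edge_def)
      then have x_disj: "anticomm_indices x \<inter> P = {}"
        using split x_out by blast
      define y where "y = pmult v x"
      have y: "y \<in> K \<union> M"
        using pmult_mem mem vx by (auto simp: y_def frust_edge_def)
      have y_indices: "anticomm_indices y = sym_diff (anticomm_indices v) (anticomm_indices x)"
        using mem by (simp add: y_def anticomm_indices_pmult length_mem)
      show False
      proof (cases "anticomm_indices v = {}")
        case True
        have "\<not> frust_edge (K \<union> M) u x" "\<not> frust_edge (K \<union> M) u y"
          using u x_out y_indices True by auto
        moreover have "anticomm u y \<longleftrightarrow> anticomm u v \<noteq> anticomm u x"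
          using mem by (simp add: y_def anticomm_pmult_right length_mem)
        ultimately show False
          using mem y uv by (auto simp: frust_edge_def)
      next
        case False
        then obtain i j where "i \<in> anticomm_indices v" "j \<in> anticomm_indices x" "j \<notin> P"
          using x_out by blast
        then have "i \<in> anticomm_indices y \<inter> P" "j \<in> anticomm_indices y - P"
          using v x_disj unfolding y_indices by blast+
        then show False
          using split y by blast
      qed
    qed
  qed
qed

lemma split_invariant_rtranclp:
  assumes split: "\<forall>x\<in>K \<union> M. anticomm_indices x \<subseteq> P \<or> anticomm_indices x \<inter> P = {}"
    and u: "anticomm_indices u \<subseteq> P" "\<forall>x. frust_edge (K \<union> M) u x \<longrightarrow> anticomm_indices x \<subseteq> P"
    and walk: "(frust_edge (K \<union> M))\<^sup>*\<^sup>* u v"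
  shows "anticomm_indices v \<subseteq> P"
proof -
  have "anticomm_indices v \<subseteq> P \<and> (\<forall>x. frust_edge (K \<union> M) v x \<longrightarrow> anticomm_indices x \<subseteq> P)"
    using walk
  proof (induction rule: rtranclp_induct)
    case (step y z)
    then show ?case
      using split_invariant_step[OF split] by blast
  qed (use u in blast)
  then show ?thesis
    by blast
qed

lemma split_K_imp_split_all:
  assumes split: "\<forall>k\<in>K. anticomm_indices k \<subseteq> P \<or> anticomm_indices k \<inter> P = {}"
  shows "\<forall>x\<in>K \<union> M. anticomm_indices x \<subseteq> P \<or> anticomm_indices x \<inter> P = {}"
proof
  fix x
  assume "x \<in> K \<union> M"
  then consider "x \<in> K" | "x \<in> M" "anticomm_indices x \<noteq> {}" | "anticomm_indices x = {}"
    by blast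
  then show "anticomm_indices x \<subseteq> P \<or> anticomm_indices x \<inter> P = {}"
  proof cases
    case 2
    then obtain k where "k \<in> K" "anticomm_indices k = anticomm_indices x"
      using anticomm_indices_M_in_K by blast
    then show ?thesis
      using split by metis
  qed (use split in auto)
qed

lemma kset_eq:
  assumes "A \<subseteq> {1..d}" "C \<subseteq> {1..d}"
  shows "kset K b A C = {k\<in>K. A \<subseteq> anticomm_indices k \<and> anticomm_indices k \<inter> C = {}}"
  using assms unfolding kset_def anticomm_indices_def by blast

lemma kset_complementary:
  assumes disj: "A \<inter> C = {}" and cover: "A \<union> C = {1..d}"
  shows "kset K b A C = {k\<in>K. anticomm_indices k = A}"
proof -
  have "A \<subseteq> anticomm_indices k \<and> anticomm_indices k \<inter> C = {} \<longleftrightarrow> anticomm_indices k = A" for k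
    using disj cover anticomm_indices_subset[of k] by blast
  moreover have "A \<subseteq> {1..d}" "C \<subseteq> {1..d}"
    using cover by auto
  ultimately show ?thesis
    by (simp add: kset_eq)
qed

end

locale nonassociative_cartan_family = commuting_cartan_family +
  assumes no_assoc: "\<forall>p\<in>{1..d}. \<forall>q\<in>{1..d}. \<forall>s\<in>{1..d}.
    p \<noteq> q \<and> p \<noteq> s \<and> q \<noteq> s \<longrightarrow> pmult (pmult (b p) (b q)) (b s) \<notin> M"
begin

text \<open>If \<open>k\<close> anticommuted with \<open>b\<^sub>p, b\<^sub>q, b\<^sub>s\<close>, then \<open>k b\<^sub>p \<in> M\<close>, \<open>k b\<^sub>p b\<^sub>q \<in> K\<close>,
  \<open>k b\<^sub>p b\<^sub>q b\<^sub>s \<in> M\<close>, and this last element anticommutes with \<open>k\<close>, so their product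
  \<open>b\<^sub>p b\<^sub>q b\<^sub>s\<close> would lie in \<open>M\<close>.\<close>
lemma anticomm_indices_eq_pair:
  assumes k: "k \<in> K" and p: "p \<in> anticomm_indices k" and q: "q \<in> anticomm_indices k"
    and pq: "p \<noteq> q"
  shows "anticomm_indices k = {p, q}"
proof (rule ccontr)
  assume "anticomm_indices k \<noteq> {p, q}"
  then obtain s where s: "s \<in> anticomm_indices k" "s \<noteq> p" "s \<noteq> q"
    using p q by blast
  have idx: "p \<in> {1..d}" "q \<in> {1..d}" "s \<in> {1..d}"
    and anti: "anticomm k (b p)" "anticomm k (b q)" "anticomm k (b s)"
    using p q s by (auto simp: anticomm_indices_def)
  have len: "length k = n" "length (b p) = n" "length (b q) = n" "length (b s) = n"
    using k idx by (simp_all add: length_mem length_b)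
  have bb: "\<not> anticomm (b i) (b j)" if "i \<in> {1..d}" "j \<in> {1..d}" for i j
    using b_commute that by blast
  define k1 where "k1 = pmult k (b p)"
  define k2 where "k2 = pmult k1 (b q)"
  define k3 where "k3 = pmult k2 (b s)"
  have "k1 \<in> M"
    using pmult_K_M k b_in_M idx anti by (simp add: k1_def)
  moreover have "anticomm k1 (b q)"
    using len anti bb idx by (simp add: k1_def anticomm_pmult)
  ultimately have "k2 \<in> K"
    using pmult_M_M b_in_M idx by (simp add: k2_def)
  moreover have "anticomm k2 (b s)"
    using len anti bb idx by (simp add: k2_def k1_def anticomm_pmult)
  ultimately have "k3 \<in> M"
    using pmult_K_M b_in_M idx by (simp add: k3_def)
  moreover have "anticomm k k3"
    using len anti by (simp add: k3_def k2_def k1_def anticomm_pmult_right)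
  ultimately have "pmult k k3 \<in> M"
    using pmult_K_M k by blast
  moreover have "pmult k k3 = pmult (pmult (b p) (b q)) (b s)"
    using len by (simp add: k3_def k2_def k1_def pmult_assoc pmult_cancel_left)
  moreover have "pmult (pmult (b p) (b q)) (b s) \<notin> M"
    using no_assoc[rule_format, of p q s] idx pq s(2,3) by auto
  ultimately show False
    by simp
qed

lemma linked_class_split:
  assumes p: "p \<in> {1..d}" and k: "k \<in> K"
  shows "anticomm_indices k \<subseteq> {j. linked p j} \<or> anticomm_indices k \<inter> {j. linked p j} = {}"
proof (rule ccontr)
  assume "\<not> ?thesis"
  then obtain i j where i: "i \<in> anticomm_indices k" "linked p i"
    and j: "j \<in> anticomm_indices k" "\<not> linked p j"
    by blast
  then have "i \<noteq> j"
    by blast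
  then have "linked i j"
    using anticomm_indices_eq_pair[OF k i(1) j(1)] k by (auto simp: linked_def)
  then show False
    using linked_trans[OF p _ i(2)] i(1) j(2) anticomm_indices_subset by blast
qed

lemma kset_decompose:
  assumes r: "r \<in> {1..d}"
  shows "kset K b {r} {1..<r} =
    {k\<in>K. anticomm_indices k = {r}} \<union> (\<Union>q\<in>{r<..d}. {k\<in>K. anticomm_indices k = {r, q}})"
proof -
  have iff: "{r} \<subseteq> anticomm_indices k \<and> anticomm_indices k \<inter> {1..<r} = {} \<longleftrightarrow>
      anticomm_indices k = {r} \<or> (\<exists>q\<in>{r<..d}. anticomm_indices k = {r, q})"
    if k: "k \<in> K" for k
  proof (intro iffI)
    assume r_k: "{r} \<subseteq> anticomm_indices k \<and> anticomm_indices k \<inter> {1..<r} = {}"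
    show "anticomm_indices k = {r} \<or> (\<exists>q\<in>{r<..d}. anticomm_indices k = {r, q})"
    proof (cases "anticomm_indices k = {r}")
      case False
      then obtain q where q: "q \<in> anticomm_indices k" "q \<noteq> r"
        using r_k by blast
      have "q \<in> {1..d}" "q \<notin> {1..<r}"
        using q r_k anticomm_indices_subset by blast+
      then have "q \<in> {r<..d}"
        using q(2) by auto
      moreover have "anticomm_indices k = {r, q}"
        using anticomm_indices_eq_pair k q r_k by blast
      ultimately show ?thesis
        by blast
    qed simp
  qed auto
  have "kset K b {r} {1..<r} =
      {k\<in>K. {r} \<subseteq> anticomm_indices k \<and> anticomm_indices k \<inter> {1..<r} = {}}"
    using r by (intro kset_eq) auto
  also have "\<dots> =
      {k\<in>K. anticomm_indices k = {r}} \<union> (\<Union>q\<in>{r<..d}. {k\<in>K. anticomm_indices k = {r, q}})"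
    by (rule set_eqI) (use iff in auto)
  finally show ?thesis .
qed

lemma card_kset_decompose:
  assumes r: "r \<in> {1..d}"
  shows "card (kset K b {r} {1..<r}) = kcard {r} + (\<Sum>q\<in>{r<..d}. kcard {r, q})"
proof -
  have fin: "finite {k\<in>K. P k}" for P
    using finite_K by simp
  have "card (kset K b {r} {1..<r}) =
      kcard {r} + card (\<Union>q\<in>{r<..d}. {k\<in>K. anticomm_indices k = {r, q}})"
    unfolding kset_decompose[OF r] kcard_def
    by (rule card_Un_disjoint) (auto simp: fin)
  also have "card (\<Union>q\<in>{r<..d}. {k\<in>K. anticomm_indices k = {r, q}}) = (\<Sum>q\<in>{r<..d}. kcard {r, q})"
    unfolding kcard_def by (rule card_UN_disjoint) (auto simp: fin doubleton_eq_iff)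
  finally show ?thesis .
qed

end

locale connected_cartan_family = nonassociative_cartan_family +
  assumes b_inj: "inj_on b {1..d}"
    and b_connected: "\<forall>i\<in>{1..d}. \<forall>j\<in>{1..d}. same_component (K \<union> M) (b i) (b j)"
begin

lemma split_indices_trivial:
  assumes split: "\<forall>k\<in>K. anticomm_indices k \<subseteq> P \<or> anticomm_indices k \<inter> P = {}"
    and p: "p \<in> P" "p \<in> {1..d}" and q: "q \<in> {1..d}"
  shows "q \<in> P"
proof (rule ccontr)
  assume q_out: "q \<notin> P"
  let ?E = "frust_edge (K \<union> M)"
  note split_all = split_K_imp_split_all[OF split]
  have start: "\<forall>x. ?E (b p) x \<longrightarrow> anticomm_indices x \<subseteq> P"
  proof (intro allI impI)
    fix x
    assume "?E (b p) x"
    then have "x \<in> K \<union> M" "p \<in> anticomm_indices x"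
      using p by (auto simp: frust_edge_def anticomm_indices_def anticomm_commute)
    then show "anticomm_indices x \<subseteq> P"
      using split_all p by blast
  qed
  have "?E\<^sup>*\<^sup>* (b p) (b q)"
    using b_connected p q by (simp add: same_component_def)
  moreover have "b p \<noteq> b q"
    using b_inj p q q_out by (metis inj_on_contraD)
  ultimately have "\<exists>y. ?E\<^sup>*\<^sup>* (b p) y \<and> ?E y (b q)"
    by (cases rule: rtranclp.cases) auto
  then obtain y where walk: "?E\<^sup>*\<^sup>* (b p) y" and edge: "?E y (b q)"
    by blast
  have "anticomm_indices y \<subseteq> P"
    using split_invariant_rtranclp[OF split_all _ start walk] anticomm_indices_b[OF p(2)] by simp
  moreover have "q \<in> anticomm_indices y"
    using edge q by (simp add: frust_edge_def mem_anticomm_indices)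
  ultimately show False
    using q_out by blast
qed

lemma linked_all:
  assumes p: "p \<in> {1..d}" and q: "q \<in> {1..d}"
  shows "linked p q"
proof -
  have split: "\<forall>k\<in>K. anticomm_indices k \<subseteq> {j. linked p j} \<or> anticomm_indices k \<inter> {j. linked p j} = {}"
    using linked_class_split[OF p] by blast
  have "p \<in> {j. linked p j}"
    by (simp add: linked_def)
  then have "q \<in> {j. linked p j}"
    using split_indices_trivial[OF split _ p q] by blast
  then show ?thesis
    by simp
qed

lemma kcard_transpose:
  assumes p: "p \<in> {1..d}" and q: "q \<in> {1..d}"
  shows "kcard (transpose p q ` X) = kcard X"
  using kcard_transpose_image[OF p q linked_all[OF p q]] .

lemma kcard_singleton: "r \<in> {1..d} \<Longrightarrow> kcard {r} = kcard {1}"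
  using kcard_transpose[of 1 r "{1}"] by simp

lemma kcard_pair:
  assumes d: "2 \<le> d" and p: "p \<in> {1..d}" and q: "q \<in> {1..d}" and pq: "p \<noteq> q"
  shows "kcard {p, q} = kcard {1, 2}"
proof -
  define q' where "q' = transpose 1 p q"
  have q': "q' \<in> {1..d}" "q' \<noteq> 1"
    using p q pq by (auto simp: q'_def transpose_def)
  have one_two: "1 \<in> {1..d}" "2 \<in> {1..d}"
    using d by auto
  have "transpose 1 p ` {p, q} = {1, q'}"
    by (simp add: q'_def)
  moreover have "transpose 2 q' ` {1, q'} = {1, 2}"
    using q' by simp
  ultimately show ?thesis
    using kcard_transpose[OF one_two(1) p, of "{p, q}"] kcard_transpose[OF one_two(2) q'(1), of "{1, q'}"]
    by simp
qed

lemma card_kset_first_anticomm: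
  assumes d: "2 \<le> d" and r: "r \<in> {1..d}"
  shows "card (kset K b {r} {1..<r}) = card (kset K b {1} {2..d}) + (d - r) * card (kset K b {1, 2} {3..d})"
proof -
  have "kset K b {1} {2..d} = {k\<in>K. anticomm_indices k = {1}}"
    using d by (intro kset_complementary) auto
  moreover have "kset K b {1, 2} {3..d} = {k\<in>K. anticomm_indices k = {1, 2}}"
    using d by (intro kset_complementary) auto
  moreover have "(\<Sum>q\<in>{r<..d}. kcard {r, q}) = (\<Sum>q\<in>{r<..d}. kcard {1, 2})"
    using kcard_pair[OF d r] by (intro sum.cong) auto
  ultimately show ?thesis
    using card_kset_decompose[OF r] kcard_singleton[OF r] by (simp add: kcard_def)
qed

end

theorem theoremC3:
  fixes n d :: nat and K M :: "pauli1 list set" and b :: "nat \<Rightarrow> pauli1 list"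
  assumes cartan: "pauli_cartan n K M"
    and d2: "d \<ge> 2"
    and bM: "\<forall>i\<in>{1..d}. b i \<in> M"
    and binj: "inj_on b {1..d}"
    and bcomm: "\<forall>i\<in>{1..d}. \<forall>j\<in>{1..d}. \<not> anticomm (b i) (b j)"
    and bconn: "\<forall>i\<in>{1..d}. \<forall>j\<in>{1..d}. same_component (K \<union> M) (b i) (b j)"
    and noassoc: "\<forall>p\<in>{1..d}. \<forall>q\<in>{1..d}. \<forall>s\<in>{1..d}.
                    p \<noteq> q \<and> p \<noteq> s \<and> q \<noteq> s \<longrightarrow> pmult (pmult (b p) (b q)) (b s) \<notin> M"
  shows "\<forall>r\<in>{1..d}. card (kset K b {r} {1..<r})
           = card (kset K b {1} {2..d}) + (d - r) * card (kset K b {1, 2} {3..d})"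
proof -
  interpret connected_cartan_family n d K M b
    using cartan bM bcomm noassoc binj bconn by unfold_locales
  show ?thesis
    using card_kset_first_anticomm d2 by blast
qed

end
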